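(* Let $V$ be an $R$-module that is a Whittaker module of type $\eta$, with cyclic Whittaker vector $w$. Then \[ R_w = R Z_V + R R_\eta(E). \]
   Context: Let $f\in\mathbb{C}[H]$ be a polynomial. $R=R(f)$ is the associative $\mathbb{C}$-algebra generated by $E,F,H$ with relations $EF-FE=f(H)$, $HE-EH=E$, $HF-FH=-F$; the monomials $F^iH^jE^k$ ($i,j,k\ge 0$) form a $\mathbb{C}$-basis of $R$. Let $R(E)=\mathbb{C}[E]$ be the subalgebra generated by $E$. Let $u\in\mathbb{C}[H]$ satisfy $f(H)=\tfrac12(u(H+1)-u(H))$ and $\Omega=2FE+u(H+1)$; the center $Z=Z(R)$ is the polynomial ring $\mathbb{C}[\Omega]$. Fix an algebra homomorphism $\eta:R(E)\to\mathbb{C}$ with $\eta(E)\neq 0$, and let $R_\eta(E)=\ker\eta$. A vector $v$ of an $R$-module $V$ is a Whittaker vector (of type $\eta$) if $Ev=\eta(E)v$; $V$ is a Whittaker module of type $\eta$ if $V=Rv$ for some Whittaker vector $v$ (a cyclic Whittaker vector). For an $R$-module $V$, $Z_V=\mathrm{Ann}_R(V)\cap Z(R)$, and for $w\in V$, $R_w=\mathrm{Ann}_R(w)=\{r\in R: rw=0\}$. *)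

theory Defs
  imports "HOL-Computational_Algebra.Polynomial"
begin

text \<open>A complex algebra is modelled as a ring 'r together with a ring homomorphism
  sc from the complex numbers into the centre of 'r (the scalars).\<close>
definition scalars :: "(complex \<Rightarrow> 'r::ring_1) \<Rightarrow> bool" where
  "scalars sc \<longleftrightarrow> (\<forall>a b. sc (a + b) = sc a + sc b) \<and> (\<forall>a b. sc (a * b) = sc a * sc b)
     \<and> sc 1 = 1 \<and> (\<forall>a r. sc a * r = r * sc a)"

definition peval :: "(complex \<Rightarrow> 'r::ring_1) \<Rightarrow> complex poly \<Rightarrow> 'r \<Rightarrow> 'r" where
  "peval sc p x = (\<Sum>i\<le>degree p. sc (coeff p i) * x ^ i)"

definition is_R_algebra ::
  "(complex \<Rightarrow> 'r::ring_1) \<Rightarrow> complex poly \<Rightarrow> 'r \<Rightarrow> 'r \<Rightarrow> 'r \<Rightarrow> bool" where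
  "is_R_algebra sc f E F H \<longleftrightarrow> scalars sc
     \<and> E * F - F * E = peval sc f H
     \<and> H * E - E * H = E
     \<and> H * F - F * H = - F
     \<and> (\<forall>r. \<exists>!c :: nat \<times> nat \<times> nat \<Rightarrow> complex. finite {m. c m \<noteq> 0} \<and>
            r = (\<Sum>m\<in>{m. c m \<noteq> 0}. sc (c m) *
                   (case m of (i, j, k) \<Rightarrow> F ^ i * H ^ j * E ^ k)))"

definition is_module :: "('r::ring_1 \<Rightarrow> 'v::ab_group_add \<Rightarrow> 'v) \<Rightarrow> bool" where
  "is_module act \<longleftrightarrow> (\<forall>a b v. act (a + b) v = act a v + act b v)
     \<and> (\<forall>a v w. act a (v + w) = act a v + act a w)
     \<and> (\<forall>a b v. act (a * b) v = act a (act b v))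
     \<and> (\<forall>v. act 1 v = v)"

definition center :: "'r::ring_1 set" where
  "center = {z. \<forall>r. z * r = r * z}"

definition annihilator :: "('r::ring_1 \<Rightarrow> 'v::ab_group_add \<Rightarrow> 'v) \<Rightarrow> 'r set" where
  "annihilator act = {r. \<forall>v. act r v = 0}"

definition ann_vec :: "('r::ring_1 \<Rightarrow> 'v::ab_group_add \<Rightarrow> 'v) \<Rightarrow> 'v \<Rightarrow> 'r set" where
  "ann_vec act w = {r. act r w = 0}"

definition Z_ann :: "('r::ring_1 \<Rightarrow> 'v::ab_group_add \<Rightarrow> 'v) \<Rightarrow> 'r set" where
  "Z_ann act = annihilator act \<inter> center"

text \<open>R_eta(E) = kernel of eta : C[E] \<rightarrow> C, where eta(p(E)) = p(a), a = eta(E).\<close>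
definition R_eta :: "(complex \<Rightarrow> 'r::ring_1) \<Rightarrow> 'r \<Rightarrow> complex \<Rightarrow> 'r set" where
  "R_eta sc E a = {peval sc p E | p. poly p a = 0}"

definition lspan :: "'r::ring_1 set \<Rightarrow> 'r set" where
  "lspan S = {(\<Sum>i<(n::nat). c i * s i) | n c s. \<forall>i<n. s i \<in> S}"

definition whittaker_vector ::
  "(complex \<Rightarrow> 'r::ring_1) \<Rightarrow> ('r \<Rightarrow> 'v::ab_group_add \<Rightarrow> 'v) \<Rightarrow> 'r \<Rightarrow> complex \<Rightarrow> 'v \<Rightarrow> bool" where
  "whittaker_vector sc act E a v \<longleftrightarrow> act E v = act (sc a) v"

definition cyclic_whittaker ::
  "(complex \<Rightarrow> 'r::ring_1) \<Rightarrow> ('r \<Rightarrow> 'v::ab_group_add \<Rightarrow> 'v) \<Rightarrow> 'r \<Rightarrow> complex \<Rightarrow> 'v \<Rightarrow> bool" where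
  "cyclic_whittaker sc act E a w \<longleftrightarrow> whittaker_vector sc act E a w \<and> (\<forall>v. \<exists>r. v = act r w)"

end

theory Submission
  imports Defs
begin

(* Write (H)_j = H (H + 1) ... (H + j - 1). Modulo the left ideal R R_eta(E), every element of R
   is congruent to a sum of terms (H)_j z_j with central z_j: the set of such elements contains 1
   and is stable under left multiplication by central elements, by H, and by F, since F z is
   congruent to (Omega - u(H + 1)) z / (2 eta(E)); by the PBW basis it is all of R.
   As R R_eta(E) annihilates w, an r with r w = 0 gives sum_j (H)_j (z_j w) = 0, where the z_j w
   are again Whittaker vectors. On a Whittaker vector v, E - eta(E) maps (H)_(j+1) v to
   -(j + 1) eta(E) (H)_j v, so applying it and inducting shows that all z_j w vanish (this is
   where eta(E) ~= 0 is needed). Hence z_j annihilates V = R w, i.e. z_j lies in Z_V. *)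

lemma lspan_zero: "0 \<in> lspan S"
  unfolding lspan_def by (rule CollectI, rule exI[of _ 0]) auto

lemma lspan_add_mult: assumes "x \<in> lspan S" "s \<in> S" shows "x + c * s \<in> lspan S"
proof -
  obtain n d t where x: "x = (\<Sum>i<(n::nat). d i * t i)" and t: "\<forall>i<n. t i \<in> S"
    using assms(1) unfolding lspan_def by blast
  have "x + c * s = (\<Sum>i<Suc n. (d(n := c)) i * (t(n := s)) i)"
    by (simp add: x)
  moreover have "\<forall>i<Suc n. (t(n := s)) i \<in> S"
    using t assms(2) by (simp add: less_Suc_eq)
  ultimately show ?thesis
    unfolding lspan_def by (intro CollectI exI[of _ "Suc n"] exI[of _ "d(n := c)"] exI[of _ "t(n := s)"]) simp
qed

lemma lspan_base: "s \<in> S \<Longrightarrow> s \<in> lspan S"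
  using lspan_add_mult[OF lspan_zero, of s S 1] by simp

lemma lspan_add: assumes "x \<in> lspan S" "y \<in> lspan S" shows "x + y \<in> lspan S"
proof -
  obtain n d t where y: "y = (\<Sum>i<(n::nat). d i * t i)" and t: "\<forall>i<n. t i \<in> S"
    using assms(2) unfolding lspan_def by blast
  have "k \<le> n \<Longrightarrow> x + (\<Sum>i<k. d i * t i) \<in> lspan S" for k
  proof (induction k)
    case 0
    then show ?case using assms(1) by simp
  next
    case (Suc k)
    then show ?case
      using lspan_add_mult[of "x + (\<Sum>i<k. d i * t i)" S "t k" "d k"] t by (simp add: add.assoc)
  qed
  then show ?thesis
    using y by simp
qed

lemma lspan_mult_left: assumes "x \<in> lspan S" shows "r * x \<in> lspan S"
proof -
  obtain n c s where x: "x = (\<Sum>i<(n::nat). c i * s i)" and s: "\<forall>i<n. s i \<in> S"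
    using assms unfolding lspan_def by blast
  have "r * x = (\<Sum>i<n. (r * c i) * s i)"
    by (simp add: x sum_distrib_left mult.assoc)
  then show ?thesis
    unfolding lspan_def using s by (intro CollectI exI[of _ n] exI[of _ "\<lambda>i. r * c i"] exI[of _ s]) simp
qed

lemma lspan_sum: "(\<And>i. i \<in> A \<Longrightarrow> g i \<in> lspan S) \<Longrightarrow> sum g A \<in> lspan S"
  by (induction A rule: infinite_finite_induct) (simp_all add: lspan_zero lspan_add)

lemma center_commute: "z \<in> center \<Longrightarrow> z * r = r * z"
  unfolding center_def by blast

lemma center_zero: "0 \<in> center"
  and center_one: "1 \<in> center"
  and center_of_nat: "of_nat n \<in> center"
  unfolding center_def by (simp_all add: mult_of_nat_commute)

lemma center_add: "x \<in> center \<Longrightarrow> y \<in> center \<Longrightarrow> x + y \<in> center"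
  unfolding center_def by (simp add: distrib_left distrib_right)

lemma center_uminus: "x \<in> center \<Longrightarrow> - x \<in> center"
  unfolding center_def by simp

lemma center_mult: assumes "x \<in> center" "y \<in> center" shows "x * y \<in> center"
  unfolding center_def
proof (intro CollectI allI)
  fix r
  have "x * y * r = x * (r * y)"
    using center_commute[OF assms(2)] by (simp add: mult.assoc)
  also have "\<dots> = r * (x * y)"
    by (simp only: mult.assoc[symmetric] center_commute[OF assms(1), of r])
  finally show "x * y * r = r * (x * y)" .
qed

(* The library's pochhammer needs a commutative semiring. *)
primrec rising_power :: "'a::ring_1 \<Rightarrow> nat \<Rightarrow> 'a" where
  "rising_power x 0 = 1"
| "rising_power x (Suc j) = (x + of_nat j) * rising_power x j"

lemma mult_rising_power: "x * rising_power x j = rising_power x (Suc j) - of_nat j * rising_power x j"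
  by (simp add: algebra_simps)

lemma rising_power_intertwine:
  assumes EH: "E * H = (H - 1) * E"
  shows "E * rising_power H (Suc j) = (rising_power H (Suc j) - of_nat (Suc j) * rising_power H j) * E"
proof (induction j)
  case 0
  then show ?case by (simp add: EH)
next
  case (Suc j)
  let ?R = "rising_power H"
  have E_shift: "E * (H + of_nat (Suc j)) = (H + of_nat j) * E"
    by (simp add: distrib_left EH mult_of_nat_commute algebra_simps)
  have of_nat_shift: "(H + of_nat j) * (of_nat (Suc j) * ?R j) = of_nat (Suc j) * ?R (Suc j)"
    by (simp only: rising_power.simps(2) mult.assoc[symmetric] mult_of_nat_commute[of "Suc j" "H + of_nat j"])
  have "E * ?R (Suc (Suc j)) = (H + of_nat j) * (E * ?R (Suc j))"
    by (simp only: rising_power.simps(2) E_shift mult.assoc[symmetric])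
  also have "\<dots> = ((H + of_nat j) * (?R (Suc j) - of_nat (Suc j) * ?R j)) * E"
    by (simp only: Suc mult.assoc)
  also have "(H + of_nat j) * (?R (Suc j) - of_nat (Suc j) * ?R j)
      = (H + of_nat j) * ?R (Suc j) - of_nat (Suc j) * ?R (Suc j)"
    by (simp only: right_diff_distrib of_nat_shift)
  also have "\<dots> = ?R (Suc (Suc j)) - of_nat (Suc (Suc j)) * ?R (Suc j)"
    by (simp add: algebra_simps)
  finally show ?case .
qed

definition rising_combs :: "'a::ring_1 \<Rightarrow> 'a set" where
  "rising_combs x = {(\<Sum>j<N. rising_power x j * z j) | N z. \<forall>j. z j \<in> center}"

lemma rising_combsI:
  "(\<And>j. z j \<in> center) \<Longrightarrow> (\<Sum>j<N. rising_power x j * z j) \<in> rising_combs x"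
  unfolding rising_combs_def by blast

lemma rising_combsE:
  assumes "s \<in> rising_combs x"
  obtains N z where "\<And>j. z j \<in> center" "s = (\<Sum>j<N. rising_power x j * z j)"
  using assms unfolding rising_combs_def by blast

lemma rising_combs_single: "z \<in> center \<Longrightarrow> rising_power x j * z \<in> rising_combs x"
  using rising_combsI[where z = "\<lambda>k. if k = j then z else 0" and N = "Suc j" and x = x]
  by (simp add: center_zero if_distrib sum.delta cong: if_cong)

lemma rising_combs_zero: "0 \<in> rising_combs x"
  using rising_combsI[where z = "\<lambda>_. 0" and N = 0 and x = x] by (simp add: center_zero)

lemma rising_combs_add:
  assumes "s \<in> rising_combs x" "t \<in> rising_combs x"
  shows "s + t \<in> rising_combs x"
proof -
  obtain M y where y: "\<And>j. y j \<in> center" "s = (\<Sum>j<M. rising_power x j * y j)"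
    using assms(1) by (elim rising_combsE) blast
  obtain N z where z: "\<And>j. z j \<in> center" "t = (\<Sum>j<N. rising_power x j * z j)"
    using assms(2) by (elim rising_combsE) blast
  have pad: "(\<Sum>j<K. rising_power x j * (if j < L then u j else 0)) = (\<Sum>j<L. rising_power x j * u j)"
    if "L \<le> K" for u :: "nat \<Rightarrow> 'a" and K L
    using that by (intro sum.mono_neutral_cong_right) auto
  have "s + t = (\<Sum>j<M + N. rising_power x j * ((if j < M then y j else 0) + (if j < N then z j else 0)))"
    unfolding y(2) z(2) distrib_left sum.distrib by (simp add: pad)
  moreover have "(if j < M then y j else 0) + (if j < N then z j else 0) \<in> center" for j
    using y(1) z(1) by (simp add: center_add center_zero)
  ultimately show ?thesis
    by (simp add: rising_combsI)
qed

lemma rising_combs_sum: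
  "(\<And>i. i \<in> A \<Longrightarrow> g i \<in> rising_combs x) \<Longrightarrow> sum g A \<in> rising_combs x"
  by (induction A rule: infinite_finite_induct) (simp_all add: rising_combs_zero rising_combs_add)

lemma rising_combs_mult_center:
  assumes "c \<in> center" "s \<in> rising_combs x"
  shows "c * s \<in> rising_combs x"
proof -
  obtain N z where z: "\<And>j. z j \<in> center" "s = (\<Sum>j<N. rising_power x j * z j)"
    using assms(2) by (elim rising_combsE) blast
  have "c * s = (\<Sum>j<N. rising_power x j * (c * z j))"
    unfolding z(2) sum_distrib_left
    by (simp add: mult.assoc[symmetric] center_commute[OF assms(1), of "rising_power x _"])
  then show ?thesis
    using z(1) assms(1) by (simp add: rising_combsI center_mult)
qed

lemma rising_combs_uminus: "s \<in> rising_combs x \<Longrightarrow> - s \<in> rising_combs x"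
  using rising_combs_mult_center[OF center_uminus[OF center_one]] by simp

lemma rising_combs_diff:
  "s \<in> rising_combs x \<Longrightarrow> t \<in> rising_combs x \<Longrightarrow> s - t \<in> rising_combs x"
  using rising_combs_add[OF _ rising_combs_uminus] by simp

lemma rising_combs_mult_left: assumes "s \<in> rising_combs x" shows "x * s \<in> rising_combs x"
proof -
  obtain N z where z: "\<And>j. z j \<in> center" "s = (\<Sum>j<N. rising_power x j * z j)"
    using assms by (elim rising_combsE) blast
  have "x * (rising_power x j * z j) \<in> rising_combs x" for j
  proof -
    have "x * (rising_power x j * z j)
        = rising_power x (Suc j) * z j - rising_power x j * (of_nat j * z j)"
      by (simp only: mult.assoc[symmetric] mult_rising_power left_diff_distrib
          mult_of_nat_commute[of j "rising_power x j"])
    then show ?thesis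
      by (simp only:) (intro rising_combs_diff rising_combs_single center_mult center_of_nat z(1))
  qed
  then show ?thesis
    unfolding z(2) sum_distrib_left by (rule rising_combs_sum)
qed

definition backward_diff :: "'a::comm_ring_1 poly \<Rightarrow> 'a poly" where
  "backward_diff v = v - pcompose v [:-1, 1:]"

lemma poly_backward_diff: "poly (backward_diff v) t = poly v t - poly v (t - 1)"
  by (simp add: backward_diff_def poly_pcompose)

lemma backward_diff_add: "backward_diff (v + u) = backward_diff v + backward_diff u"
  by (simp add: backward_diff_def pcompose_add)

lemma backward_diff_smult: "backward_diff (smult c v) = smult c (backward_diff v)"
  by (simp add: backward_diff_def pcompose_smult smult_diff_right)

lemma backward_diff_sum: "backward_diff (sum v A) = (\<Sum>i\<in>A. backward_diff (v i))"
  by (simp add: backward_diff_def pcompose_sum sum_subtractf)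

lemma monom_in_range_backward_diff:
  "monom 1 n \<in> range (backward_diff :: 'a::field_char_0 poly \<Rightarrow> 'a poly)"
proof (induction n rule: less_induct)
  case (less n)
  define v :: "nat \<Rightarrow> 'a poly" where "v k = inv backward_diff (monom 1 k)" for k
  have v: "backward_diff (v k) = monom 1 k" if "k < n" for k
    unfolding v_def using less[OF that] by (rule f_inv_into_f)
  define b :: "nat \<Rightarrow> 'a" where "b k = of_nat (Suc n choose k) * (-1) ^ (Suc n - k)" for k
  have "monom 1 n = smult (inverse (of_nat (Suc n)))
      (backward_diff (monom 1 (Suc n)) + (\<Sum>k<n. smult (b k) (monom 1 k)))"
  proof (rule poly_eq_poly_eq_iff[THEN iffD1], rule ext)
    fix t :: 'a
    have "(t - 1) ^ Suc n = (t + (-1)) ^ Suc n" by simp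
    also have "\<dots> = (\<Sum>k\<le>Suc n. of_nat (Suc n choose k) * t ^ k * (-1) ^ (Suc n - k))"
      by (rule binomial_ring)
    also have "\<dots> = (\<Sum>k<n. b k * t ^ k) - of_nat (Suc n) * t ^ n + t ^ Suc n"
      by (simp add: lessThan_Suc_atMost[symmetric] b_def algebra_simps)
    finally have "t ^ Suc n - (t - 1) ^ Suc n + (\<Sum>k<n. b k * t ^ k) = of_nat (Suc n) * t ^ n"
      by (simp add: algebra_simps)
    then show "poly (monom 1 n) t = poly (smult (inverse (of_nat (Suc n)))
      (backward_diff (monom 1 (Suc n)) + (\<Sum>k<n. smult (b k) (monom 1 k)))) t"
      by (simp add: poly_backward_diff poly_monom poly_sum del: of_nat_Suc)
  qed
  also have "\<dots> = backward_diff (smult (inverse (of_nat (Suc n)))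
      (monom 1 (Suc n) + (\<Sum>k<n. smult (b k) (v k))))"
    by (simp add: backward_diff_smult backward_diff_add backward_diff_sum v)
  finally show ?case by (rule range_eqI)
qed

lemma surj_backward_diff: "surj (backward_diff :: 'a::field_char_0 poly \<Rightarrow> 'a poly)"
proof -
  define v :: "nat \<Rightarrow> 'a poly" where "v i = inv backward_diff (monom 1 i)" for i
  have v: "backward_diff (v i) = monom 1 i" for i
    unfolding v_def using monom_in_range_backward_diff by (rule f_inv_into_f)
  have "backward_diff (\<Sum>i\<le>degree g. smult (coeff g i) (v i)) = g" for g
  proof -
    have "backward_diff (\<Sum>i\<le>degree g. smult (coeff g i) (v i))
        = (\<Sum>i\<le>degree g. monom (coeff g i) i)"
      by (simp add: backward_diff_sum backward_diff_smult v smult_monom)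
    then show ?thesis
      by (simp only: poly_as_sum_of_monoms)
  qed
  then show ?thesis
    by (rule surjI)
qed

locale complex_scalars =
  fixes sc :: "complex \<Rightarrow> 'r::ring_1"
  assumes scalars: "scalars sc"
begin

lemma sc_add: "sc (x + y) = sc x + sc y"
  and sc_mult: "sc (x * y) = sc x * sc y"
  and sc_one [simp]: "sc 1 = 1"
  and sc_commute: "sc x * r = r * sc x"
  using scalars unfolding scalars_def by blast+

lemma sc_zero [simp]: "sc 0 = 0"
  using sc_add[of 0 0] by simp

lemma sc_minus: "sc (- x) = - sc x"
proof -
  have "sc x + sc (- x) = 0"
    using sc_add[of x "- x"] by simp
  then show ?thesis
    by (metis minus_unique)
qed

lemma sc_of_nat: "sc (of_nat n) = of_nat n"
  by (induction n) (simp_all add: sc_add)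

lemma sc_in_center: "sc x \<in> center"
  unfolding center_def using sc_commute by blast

lemma peval_0 [simp]: "peval sc 0 X = 0"
  unfolding peval_def by simp

lemma peval_pCons: "peval sc (pCons c p) X = sc c + X * peval sc p X"
proof -
  have sum_upto: "peval sc q X = (\<Sum>i<N. sc (coeff q i) * X ^ i)" if "degree q < N" for q N
    unfolding peval_def lessThan_Suc_atMost[symmetric]
    using that by (intro sum.mono_neutral_left) (auto simp: coeff_eq_0)
  have sc_X: "sc k * X ^ Suc i = X * (sc k * X ^ i)" for k i
    by (simp only: power_Suc mult.assoc[symmetric] sc_commute[of k X])
  have "peval sc (pCons c p) X = (\<Sum>i<Suc (Suc (degree p)). sc (coeff (pCons c p) i) * X ^ i)"
    using degree_pCons_le[of c p] by (intro sum_upto) linarith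
  also have "\<dots> = sc c + (\<Sum>i<Suc (degree p). sc (coeff p i) * X ^ Suc i)"
    by (subst sum.lessThan_Suc_shift) simp
  also have "\<dots> = sc c + X * (\<Sum>i<Suc (degree p). sc (coeff p i) * X ^ i)"
    by (simp only: sum_distrib_left sc_X)
  also have "\<dots> = sc c + X * peval sc p X"
    using sum_upto[of p "Suc (degree p)"] by simp
  finally show ?thesis .
qed

lemma peval_const: "peval sc [:c:] X = sc c"
  by (simp add: peval_pCons)

lemma peval_add: "peval sc (p + q) X = peval sc p X + peval sc q X"
proof (induction p arbitrary: q)
  case 0
  then show ?case by simp
next
  case (pCons c p)
  obtain d q' where q: "q = pCons d q'"
    by (cases q) auto
  show ?case
    using pCons.IH[of q'] by (simp add: q peval_pCons sc_add distrib_left)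
qed

lemma peval_smult: "peval sc (smult c p) X = sc c * peval sc p X"
proof (induction p)
  case 0
  then show ?case by simp
next
  case (pCons d p)
  have "X * (sc c * peval sc p X) = sc c * (X * peval sc p X)"
    by (simp only: mult.assoc[symmetric] sc_commute[of c X])
  then show ?case
    using pCons by (simp add: peval_pCons sc_mult distrib_left)
qed

lemma peval_mult: "peval sc (p * q) X = peval sc p X * peval sc q X"
  by (induction p) (simp_all add: peval_pCons peval_add peval_smult distrib_right mult.assoc)

lemma peval_diff: "peval sc (p - q) X = peval sc p X - peval sc q X"
  using peval_add[of "p - q" q X] by (simp add: algebra_simps)

lemma peval_pcompose: "peval sc (pcompose p q) X = peval sc p (peval sc q X)"
  by (induction p) (simp_all add: pcompose_pCons peval_add peval_mult peval_const peval_pCons)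

lemma peval_monom: "peval sc (monom c k) X = sc c * X ^ k"
proof (induction k)
  case 0
  then show ?case by (simp add: monom_0 peval_const)
next
  case (Suc k)
  then show ?case
    by (simp add: monom_Suc peval_pCons mult.assoc[symmetric] sc_commute[of c X])
qed

lemma peval_intertwine:
  assumes "X * Y = Y' * X"
  shows "X * peval sc p Y = peval sc p Y' * X"
proof (induction p)
  case 0
  then show ?case by simp
next
  case (pCons c p)
  have "X * peval sc (pCons c p) Y = sc c * X + (X * Y) * peval sc p Y"
    by (simp add: peval_pCons distrib_left mult.assoc sc_commute)
  also have "\<dots> = (sc c + Y' * peval sc p Y') * X"
    by (simp add: assms pCons.IH distrib_right mult.assoc)
  finally show ?case
    by (simp add: peval_pCons)
qed

lemma peval_in_rising_combs: "z \<in> center \<Longrightarrow> peval sc p X * z \<in> rising_combs X"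
proof (induction p arbitrary: z)
  case 0
  then show ?case by (simp add: rising_combs_zero)
next
  case (pCons c p)
  have "peval sc (pCons c p) X * z = rising_power X 0 * (sc c * z) + X * (peval sc p X * z)"
    by (simp add: peval_pCons distrib_right mult.assoc)
  then show ?case
    by (simp only:) (intro rising_combs_add rising_combs_single rising_combs_mult_left
        center_mult sc_in_center pCons)
qed

end

locale left_module =
  fixes act :: "'r::ring_1 \<Rightarrow> 'v::ab_group_add \<Rightarrow> 'v"
  assumes module: "is_module act"
begin

lemma act_add_left: "act (x + y) v = act x v + act y v"
  and act_add_right: "act x (u + v) = act x u + act x v"
  and act_mult: "act (x * y) v = act x (act y v)"
  and act_one [simp]: "act 1 v = v"
  using module unfolding is_module_def by blast+

lemma act_zero_left [simp]: "act 0 v = 0"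
  using act_add_left[of 0 0 v] by simp

lemma act_zero_right [simp]: "act x 0 = 0"
  using act_add_right[of x 0 0] by simp

lemma act_diff_left: "act (x - y) v = act x v - act y v"
  using act_add_left[of "x - y" y v] by (simp add: eq_diff_eq)

lemma act_sum_left: "act (sum g A) v = (\<Sum>i\<in>A. act (g i) v)"
  by (induction A rule: infinite_finite_induct) (simp_all add: act_add_left)

lemma act_sum_right: "act x (sum g A) = (\<Sum>i\<in>A. act x (g i))"
  by (induction A rule: infinite_finite_induct) (simp_all add: act_add_right)

lemma lspan_subset_ann_vec: "S \<subseteq> ann_vec act w \<Longrightarrow> lspan S \<subseteq> ann_vec act w"
  unfolding lspan_def ann_vec_def by (auto simp: act_sum_left act_mult subset_iff intro!: sum.neutral)

end

locale R_algebra =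
  fixes sc :: "complex \<Rightarrow> 'r::ring_1" and f :: "complex poly" and E F H :: 'r
  assumes R_algebra: "is_R_algebra sc f E F H"

sublocale R_algebra \<subseteq> complex_scalars sc
  using R_algebra unfolding is_R_algebra_def by unfold_locales blast

context R_algebra
begin

lemma E_F: "E * F = F * E + peval sc f H"
  using R_algebra unfolding is_R_algebra_def by (simp add: algebra_simps)

lemma E_H: "E * H = (H - 1) * E"
  using R_algebra unfolding is_R_algebra_def by (simp add: algebra_simps)

lemma F_H: "F * H = (H + 1) * F"
  using R_algebra unfolding is_R_algebra_def by (simp add: algebra_simps)

lemma PBW_expansion:
  obtains c :: "nat \<times> nat \<times> nat \<Rightarrow> complex"
  where "r = (\<Sum>m\<in>{m. c m \<noteq> 0}. sc (c m) * (case m of (i, j, k) \<Rightarrow> F ^ i * H ^ j * E ^ k))"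
  using R_algebra unfolding is_R_algebra_def by blast

lemma in_center_if_commutes_generators:
  assumes "z * E = E * z" "z * F = F * z" "z * H = H * z"
  shows "z \<in> center"
  unfolding center_def
proof (intro CollectI allI)
  fix r
  have commutes_mult: "z * (x * y) = (x * y) * z" if "z * x = x * z" "z * y = y * z" for x y
    using that by (metis mult.assoc)
  have commutes_power: "z * X ^ n = X ^ n * z" if "z * X = X * z" for X n
    using power_commuting_commutes[of X z n] that by simp
  have "z * (sc c * (F ^ i * H ^ j * E ^ k)) = (sc c * (F ^ i * H ^ j * E ^ k)) * z" for c i j k
    by (intro commutes_mult commutes_power assms) (simp add: sc_commute)
  moreover obtain c where
    "r = (\<Sum>m\<in>{m. c m \<noteq> 0}. sc (c m) * (case m of (i, j, k) \<Rightarrow> F ^ i * H ^ j * E ^ k))"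
    by (rule PBW_expansion)
  ultimately show "z * r = r * z"
    by (simp add: sum_distrib_left sum_distrib_right split_def)
qed

text \<open>\<open>casimir_poly\<close> is \<open>u(x + 1)\<close> in the notation of the paper, where
  \<open>u(x + 1) - u(x) = 2 f(x)\<close>; thus \<open>casimir\<close> is \<open>\<Omega>\<close>.\<close>
definition casimir_poly :: "complex poly" where
  "casimir_poly = inv backward_diff (smult 2 f)"

definition casimir :: 'r where
  "casimir = 2 * (F * E) + peval sc casimir_poly H"

lemma peval_casimir_poly_diff:
  "peval sc casimir_poly X - peval sc casimir_poly (X - 1) = 2 * peval sc f X"
proof -
  have "backward_diff casimir_poly = smult 2 f"
    unfolding casimir_poly_def using surj_backward_diff by (rule surj_f_inv_f)
  then have "peval sc (casimir_poly - pcompose casimir_poly [:-1, 1:]) X = peval sc (smult 2 f) X"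
    unfolding backward_diff_def by simp
  moreover have "peval sc [:-1, 1:] X = X - 1"
    by (simp add: peval_pCons sc_minus)
  moreover have "sc 2 = 2"
    using sc_add[of 1 1] by simp
  ultimately show ?thesis
    by (simp add: peval_diff peval_pcompose peval_smult)
qed

lemma casimir_commutes_H: "casimir * H = H * casimir"
proof -
  have "H * (F * E) = (F * H - F) * E"
    by (simp add: F_H algebra_simps flip: mult.assoc)
  also have "\<dots> = F * E * H"
    by (simp add: E_H algebra_simps)
  finally have "H * (F * E) = F * E * H" .
  moreover have "peval sc casimir_poly H * H = H * peval sc casimir_poly H"
    by (rule peval_intertwine[symmetric]) (rule refl)
  ultimately show ?thesis
    unfolding casimir_def by (simp add: algebra_simps mult_2 mult_2_right)
qed

lemma casimir_commutes_E: "E * casimir = casimir * E"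
proof -
  have "E * peval sc casimir_poly H = peval sc casimir_poly (H - 1) * E"
    by (rule peval_intertwine[OF E_H])
  also have "peval sc casimir_poly (H - 1) = peval sc casimir_poly H - 2 * peval sc f H"
    using peval_casimir_poly_diff[of H] by (simp add: algebra_simps)
  finally have "E * peval sc casimir_poly H = (peval sc casimir_poly H - 2 * peval sc f H) * E" .
  moreover have "E * (F * E) = F * E * E + peval sc f H * E"
    by (simp add: E_F algebra_simps flip: mult.assoc)
  ultimately show ?thesis
    unfolding casimir_def by (simp add: algebra_simps mult_2 mult_2_right)
qed

lemma casimir_commutes_F: "F * casimir = casimir * F"
proof -
  have "F * peval sc casimir_poly H = (peval sc casimir_poly H + 2 * peval sc f (H + 1)) * F"
    using peval_intertwine[OF F_H] peval_casimir_poly_diff[of "H + 1"] by (simp add: algebra_simps mult_2)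
  moreover have "F * E * F = F * F * E + peval sc f (H + 1) * F"
    by (simp add: mult.assoc E_F algebra_simps peval_intertwine[OF F_H])
  ultimately show ?thesis
    unfolding casimir_def by (simp add: algebra_simps mult_2 mult_2_right)
qed

lemma casimir_in_center: "casimir \<in> center"
  by (rule in_center_if_commutes_generators)
    (simp_all add: casimir_commutes_E casimir_commutes_F casimir_commutes_H)

end

locale whittaker_type = R_algebra +
  fixes a :: complex
  assumes a_nonzero: "a \<noteq> 0"
begin

abbreviation eta_ideal where
  "eta_ideal \<equiv> lspan (R_eta sc E a)"

lemma E_power_minus_in_R_eta: "E ^ k - sc (a ^ k) \<in> R_eta sc E a"
proof -
  have "peval sc (monom 1 k - [:a ^ k:]) E = E ^ k - sc (a ^ k)"
    by (simp add: peval_diff peval_monom peval_const)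
  moreover have "poly (monom 1 k - [:a ^ k:]) a = 0"
    by (simp add: poly_monom)
  ultimately show ?thesis
    unfolding R_eta_def mem_Collect_eq by metis
qed

lemma mult_E_minus_in_eta_ideal: "x * (E - sc a) \<in> eta_ideal"
  using E_power_minus_in_R_eta[of 1] by (simp add: lspan_mult_left lspan_base)

definition rising_combs_plus_eta where
  "rising_combs_plus_eta = {s + i | s i. s \<in> rising_combs H \<and> i \<in> eta_ideal}"

lemma rising_combs_plus_etaI:
  "s \<in> rising_combs H \<Longrightarrow> i \<in> eta_ideal \<Longrightarrow> s + i \<in> rising_combs_plus_eta"
  unfolding rising_combs_plus_eta_def by blast

lemma rising_combs_plus_etaE:
  assumes "r \<in> rising_combs_plus_eta"
  obtains s i where "s \<in> rising_combs H" "i \<in> eta_ideal" "r = s + i"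
  using assms unfolding rising_combs_plus_eta_def by blast

lemma rising_combs_in_rising_combs_plus_eta: "s \<in> rising_combs H \<Longrightarrow> s \<in> rising_combs_plus_eta"
  using rising_combs_plus_etaI[OF _ lspan_zero] by simp

lemma eta_ideal_in_rising_combs_plus_eta: "i \<in> eta_ideal \<Longrightarrow> i \<in> rising_combs_plus_eta"
  using rising_combs_plus_etaI[OF rising_combs_zero] by simp

lemma rising_combs_plus_eta_add:
  assumes "r \<in> rising_combs_plus_eta" "r' \<in> rising_combs_plus_eta"
  shows "r + r' \<in> rising_combs_plus_eta"
proof -
  obtain s i where "s \<in> rising_combs H" "i \<in> eta_ideal" "r = s + i"
    using assms(1) by (rule rising_combs_plus_etaE)
  moreover obtain s' i' where "s' \<in> rising_combs H" "i' \<in> eta_ideal" "r' = s' + i'"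
    using assms(2) by (rule rising_combs_plus_etaE)
  ultimately have "r + r' = (s + s') + (i + i')" "s + s' \<in> rising_combs H" "i + i' \<in> eta_ideal"
    by (simp_all add: algebra_simps rising_combs_add lspan_add)
  then show ?thesis
    by (simp add: rising_combs_plus_etaI)
qed

lemma rising_combs_plus_eta_sum:
  "(\<And>i. i \<in> A \<Longrightarrow> g i \<in> rising_combs_plus_eta) \<Longrightarrow> sum g A \<in> rising_combs_plus_eta"
  by (induction A rule: infinite_finite_induct)
    (simp_all add: rising_combs_plus_eta_add rising_combs_in_rising_combs_plus_eta rising_combs_zero)

lemma mult_left_rising_combs_plus_eta:
  assumes "\<And>s. s \<in> rising_combs H \<Longrightarrow> x * s \<in> rising_combs_plus_eta"
    and "r \<in> rising_combs_plus_eta"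
  shows "x * r \<in> rising_combs_plus_eta"
proof -
  obtain s i where "s \<in> rising_combs H" "i \<in> eta_ideal" "r = s + i"
    using assms(2) by (rule rising_combs_plus_etaE)
  then show ?thesis
    using assms(1) eta_ideal_in_rising_combs_plus_eta[OF lspan_mult_left]
    by (simp add: distrib_left rising_combs_plus_eta_add)
qed

lemma H_mult_rising_combs_plus_eta:
  assumes "r \<in> rising_combs_plus_eta"
  shows "H * r \<in> rising_combs_plus_eta"
  using rising_combs_in_rising_combs_plus_eta[OF rising_combs_mult_left] assms
  by (rule mult_left_rising_combs_plus_eta)

lemma center_mult_rising_combs_plus_eta:
  assumes "c \<in> center" "r \<in> rising_combs_plus_eta"
  shows "c * r \<in> rising_combs_plus_eta"
  using rising_combs_in_rising_combs_plus_eta[OF rising_combs_mult_center[OF assms(1)]] assms(2)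
  by (rule mult_left_rising_combs_plus_eta)

text \<open>Modulo the eta ideal, \<open>F\<close> is \<open>(\<Omega> - u(H + 1)) / (2 \<eta>(E))\<close>.\<close>
lemma F_mult_center_in_rising_combs_plus_eta:
  assumes z: "z \<in> center"
  shows "F * z \<in> rising_combs_plus_eta"
proof -
  define c where "c = sc (inverse (2 * a))"
  define d where "d = sc (- inverse a)"
  let ?U = "peval sc casimir_poly H"
  have "sc (inverse (2 * a)) + sc (inverse (2 * a)) + sc (- inverse a) = 0"
    by (simp flip: sc_add)
  then have cd: "c + c + d = 0"
    unfolding c_def d_def .
  have da: "d * sc a = -1"
    unfolding d_def using a_nonzero by (simp flip: sc_mult add: sc_minus)
  have dE: "d * E = E * d"
    unfolding d_def by (rule sc_commute)
  have "casimir * c - ?U * c + F * d * (E - sc a) = F * E * (c + c + d) - F * (d * sc a)"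
    unfolding casimir_def by (simp add: algebra_simps mult_2 dE)
  then have F_eq: "F = casimir * c - ?U * c + F * d * (E - sc a)"
    by (simp add: cd da)
  have "F * z = z * F"
    using center_commute[OF z] by simp
  also have "\<dots> = z * (casimir * c - ?U * c + F * d * (E - sc a))"
    by (simp only: F_eq[symmetric])
  also have "\<dots> = (rising_power H 0 * (z * casimir * c) - ?U * (z * c)) + z * F * d * (E - sc a)"
    by (simp add: distrib_left right_diff_distrib mult.assoc[symmetric] center_commute[OF z, of ?U])
  finally show ?thesis
    unfolding c_def
    by (simp only:) (intro rising_combs_plus_etaI rising_combs_diff rising_combs_single
        peval_in_rising_combs center_mult z casimir_in_center sc_in_center mult_E_minus_in_eta_ideal)
qed

lemma F_mult_rising_power_in_rising_combs_plus_eta: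
  "z \<in> center \<Longrightarrow> F * (rising_power H j * z) \<in> rising_combs_plus_eta"
proof (induction j arbitrary: z)
  case 0
  then show ?case by (simp add: F_mult_center_in_rising_combs_plus_eta)
next
  case (Suc j)
  have "F * (rising_power H (Suc j) * z)
      = H * (F * (rising_power H j * z)) + F * (rising_power H j * z)
        + F * (rising_power H j * (of_nat j * z))"
    by (simp add: distrib_left distrib_right mult.assoc[symmetric] F_H
        mult_of_nat_commute[of j "rising_power H j"])
  then show ?case
    by (simp only:) (intro rising_combs_plus_eta_add H_mult_rising_combs_plus_eta Suc.IH
        center_mult center_of_nat Suc.prems)
qed

lemma F_mult_rising_combs_plus_eta: "r \<in> rising_combs_plus_eta \<Longrightarrow> F * r \<in> rising_combs_plus_eta"
proof (rule mult_left_rising_combs_plus_eta)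
  fix s
  assume "s \<in> rising_combs H"
  then obtain N z where "\<And>j. z j \<in> center" "s = (\<Sum>j<N. rising_power H j * z j)"
    by (elim rising_combsE) blast
  then show "F * s \<in> rising_combs_plus_eta"
    by (simp only: sum_distrib_left)
      (intro rising_combs_plus_eta_sum F_mult_rising_power_in_rising_combs_plus_eta)
qed

lemma rising_combs_plus_eta_UNIV: "r \<in> rising_combs_plus_eta"
proof -
  have one: "1 \<in> rising_combs_plus_eta"
    using rising_combs_in_rising_combs_plus_eta[OF rising_combs_single[OF center_one, of H 0]] by simp
  have FH: "F ^ i * H ^ j \<in> rising_combs_plus_eta" for i j
  proof (induction i)
    case 0
    show ?case
      by (induction j) (simp_all add: one H_mult_rising_combs_plus_eta)
  next
    case (Suc i)
    then show ?case
      by (simp add: mult.assoc F_mult_rising_combs_plus_eta)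
  qed
  have monomial: "sc c * (F ^ i * H ^ j * E ^ k) \<in> rising_combs_plus_eta" for c i j k
  proof -
    let ?X = "sc c * (F ^ i * H ^ j)"
    have "sc c * (F ^ i * H ^ j * E ^ k) = sc (a ^ k) * ?X + ?X * (E ^ k - sc (a ^ k))"
      by (simp add: right_diff_distrib sc_commute[of "a ^ k"] mult.assoc)
    moreover have "sc (a ^ k) * ?X \<in> rising_combs_plus_eta"
      by (intro center_mult_rising_combs_plus_eta sc_in_center FH)
    moreover have "?X * (E ^ k - sc (a ^ k)) \<in> rising_combs_plus_eta"
      by (intro eta_ideal_in_rising_combs_plus_eta lspan_mult_left lspan_base E_power_minus_in_R_eta)
    ultimately show ?thesis
      by (simp add: rising_combs_plus_eta_add)
  qed
  obtain c where
    "r = (\<Sum>m\<in>{m. c m \<noteq> 0}. sc (c m) * (case m of (i, j, k) \<Rightarrow> F ^ i * H ^ j * E ^ k))"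
    by (rule PBW_expansion)
  then show ?thesis
    unfolding split_def by (simp only:) (intro rising_combs_plus_eta_sum monomial)
qed

end

locale whittaker_module = whittaker_type sc f E F H a + left_module act
  for sc :: "complex \<Rightarrow> 'r::ring_1" and f E F H a and act :: "'r \<Rightarrow> 'v::ab_group_add \<Rightarrow> 'v" +
  fixes w :: 'v
  assumes cyclic: "cyclic_whittaker sc act E a w"
begin

lemma whittaker_vector_w: "whittaker_vector sc act E a w"
  using cyclic unfolding cyclic_whittaker_def by blast

lemma whittaker_vector_act_center:
  assumes "z \<in> center" "whittaker_vector sc act E a x"
  shows "whittaker_vector sc act E a (act z x)"
proof -
  have "act E (act z x) = act z (act E x)"
    by (simp only: act_mult[symmetric] center_commute[OF assms(1)])
  also have "\<dots> = act z (act (sc a) x)"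
    using assms(2) unfolding whittaker_vector_def by simp
  also have "\<dots> = act (sc a) (act z x)"
    by (simp only: act_mult[symmetric] center_commute[OF assms(1)])
  finally show ?thesis
    unfolding whittaker_vector_def .
qed

lemma act_sc_eq_zero: assumes "c \<noteq> 0" "act (sc c) x = 0" shows "x = 0"
proof -
  have "x = act (sc (inverse c) * sc c) x"
    using assms(1) by (simp flip: sc_mult)
  then show ?thesis
    by (simp add: act_mult assms(2))
qed

lemma act_peval_E:
  assumes "whittaker_vector sc act E a x"
  shows "act (peval sc p E) x = act (sc (poly p a)) x"
proof (induction p)
  case 0
  then show ?case by simp
next
  case (pCons c p)
  have "act (E * peval sc p E) x = act E (act (sc (poly p a)) x)"
    by (simp add: act_mult pCons.IH)
  also have "\<dots> = act (sc (poly p a)) (act E x)"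
    by (simp only: act_mult[symmetric] sc_commute[of "poly p a"])
  also have "\<dots> = act (sc (poly p a)) (act (sc a) x)"
    using assms unfolding whittaker_vector_def by simp
  also have "\<dots> = act (sc (a * poly p a)) x"
    by (simp only: act_mult[symmetric] sc_mult sc_commute[of a])
  finally show ?case
    by (simp add: peval_pCons act_add_left sc_add)
qed

lemma eta_ideal_subset_ann_vec: "eta_ideal \<subseteq> ann_vec act w"
proof (rule lspan_subset_ann_vec, rule subsetI)
  fix r
  assume "r \<in> R_eta sc E a"
  then obtain p where "r = peval sc p E" "poly p a = 0"
    unfolding R_eta_def by blast
  then show "r \<in> ann_vec act w"
    unfolding ann_vec_def by (simp add: act_peval_E[OF whittaker_vector_w])
qed

lemma E_minus_rising_power_act:
  assumes "whittaker_vector sc act E a x"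
  shows "act ((E - sc a) * rising_power H (Suc k)) x
       = act (rising_power H k) (act (sc (- (of_nat (Suc k) * a))) x)"
proof -
  let ?R = "rising_power H"
  let ?s = "of_nat (Suc k) :: 'r"
  have "act ((E - sc a) * ?R (Suc k)) x
      = act ((?R (Suc k) - ?s * ?R k) * E) x - act (sc a * ?R (Suc k)) x"
    by (simp only: left_diff_distrib act_diff_left rising_power_intertwine[OF E_H])
  also have "\<dots> = act ((?R (Suc k) - ?s * ?R k) * sc a - sc a * ?R (Suc k)) x"
    using assms unfolding whittaker_vector_def by (simp only: act_mult act_diff_left)
  also have "(?R (Suc k) - ?s * ?R k) * sc a - sc a * ?R (Suc k) = - (?s * ?R k * sc a)"
    using sc_commute[of a "?R (Suc k)"] by (simp add: algebra_simps)
  also have "?s * ?R k * sc a = ?R k * sc (of_nat (Suc k) * a)"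
    unfolding sc_mult sc_of_nat
    by (simp only: mult.assoc[symmetric] mult_of_nat_commute[of "Suc k" "?R k"])
  also have "- (?R k * sc (of_nat (Suc k) * a)) = ?R k * sc (- (of_nat (Suc k) * a))"
    by (simp add: sc_minus)
  finally show ?thesis
    by (simp only: act_mult)
qed

lemma E_minus_act_rising_power_sum:
  assumes "\<forall>j<Suc N. whittaker_vector sc act E a (x j)"
  shows "act (E - sc a) (\<Sum>j<Suc N. act (rising_power H j) (x j))
       = (\<Sum>k<N. act (rising_power H k) (act (sc (- (of_nat (Suc k) * a))) (x (Suc k))))"
proof -
  have "act (E - sc a) (\<Sum>j<Suc N. act (rising_power H j) (x j))
      = act (E - sc a) (x 0) + (\<Sum>k<N. act ((E - sc a) * rising_power H (Suc k)) (x (Suc k)))"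
    by (simp add: act_sum_right act_add_right act_mult sum.lessThan_Suc_shift
        del: sum.lessThan_Suc rising_power.simps(2))
  also have "act (E - sc a) (x 0) = 0"
    using assms unfolding whittaker_vector_def by (simp add: act_diff_left)
  also have "(\<Sum>k<N. act ((E - sc a) * rising_power H (Suc k)) (x (Suc k)))
      = (\<Sum>k<N. act (rising_power H k) (act (sc (- (of_nat (Suc k) * a))) (x (Suc k))))"
    using assms by (intro sum.cong refl E_minus_rising_power_act) simp
  finally show ?thesis
    by simp
qed

lemma rising_power_act_independent:
  assumes "\<forall>j<N. whittaker_vector sc act E a (x j)" "(\<Sum>j<N. act (rising_power H j) (x j)) = 0"
  shows "\<forall>j<N. x j = 0"
  using assms
proof (induction N arbitrary: x)
  case 0
  then show ?case by simp
next
  case (Suc N)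
  define y where "y k = act (sc (- (of_nat (Suc k) * a))) (x (Suc k))" for k
  have "(\<Sum>k<N. act (rising_power H k) (y k)) = 0"
    using E_minus_act_rising_power_sum[OF Suc.prems(1)] Suc.prems(2) unfolding y_def by simp
  moreover have "\<forall>k<N. whittaker_vector sc act E a (y k)"
    unfolding y_def using Suc.prems(1) by (simp add: whittaker_vector_act_center sc_in_center)
  ultimately have y: "\<forall>k<N. y k = 0"
    using Suc.IH by blast
  have x_Suc: "x (Suc k) = 0" if "k < N" for k
  proof (rule act_sc_eq_zero)
    show "- (of_nat (Suc k) * a) \<noteq> 0"
      using a_nonzero by (simp del: of_nat_Suc)
    show "act (sc (- (of_nat (Suc k) * a))) (x (Suc k)) = 0"
      using y that unfolding y_def by blast
  qed
  then have "x 0 = (\<Sum>j<Suc N. act (rising_power H j) (x j))"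
    by (simp add: sum.lessThan_Suc_shift del: sum.lessThan_Suc)
  then have "x 0 = 0"
    using Suc.prems(2) by simp
  then show ?case
    using x_Suc by (auto simp: less_Suc_eq_0_disj)
qed

lemma center_ann_vec_in_Z_ann:
  assumes "z \<in> center" "act z w = 0"
  shows "z \<in> Z_ann act"
proof -
  have "act z v = 0" for v
  proof -
    obtain q where "v = act q w"
      using cyclic unfolding cyclic_whittaker_def by blast
    then show ?thesis
      by (simp flip: act_mult add: center_commute[OF assms(1)]) (simp add: act_mult assms(2))
  qed
  then show ?thesis
    unfolding Z_ann_def annihilator_def using assms(1) by blast
qed

lemma ann_vec_eq: "ann_vec act w = {x + y | x y. x \<in> lspan (Z_ann act) \<and> y \<in> eta_ideal}"
proof (intro equalityI subsetI)
  fix r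
  assume r: "r \<in> ann_vec act w"
  obtain s i where s: "s \<in> rising_combs H" and i: "i \<in> eta_ideal" and r_eq: "r = s + i"
    using rising_combs_plus_eta_UNIV by (rule rising_combs_plus_etaE)
  obtain N z where z: "\<And>j. z j \<in> center" and s_eq: "s = (\<Sum>j<N. rising_power H j * z j)"
    using s by (elim rising_combsE) blast
  have "act s w = 0"
    using r i eta_ideal_subset_ann_vec unfolding r_eq ann_vec_def by (auto simp: act_add_left)
  then have "(\<Sum>j<N. act (rising_power H j) (act (z j) w)) = 0"
    by (simp add: s_eq act_sum_left act_mult)
  then have "\<forall>j<N. act (z j) w = 0"
    using z whittaker_vector_w
    by (intro rising_power_act_independent) (simp_all add: whittaker_vector_act_center)
  then have "s \<in> lspan (Z_ann act)"
    unfolding s_eq using z center_ann_vec_in_Z_ann by (intro lspan_sum lspan_mult_left lspan_base) simp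
  then show "r \<in> {x + y | x y. x \<in> lspan (Z_ann act) \<and> y \<in> eta_ideal}"
    using i r_eq by blast
next
  fix r
  assume "r \<in> {x + y | x y. x \<in> lspan (Z_ann act) \<and> y \<in> eta_ideal}"
  then obtain x y where "r = x + y" "x \<in> lspan (Z_ann act)" "y \<in> eta_ideal"
    by blast
  moreover have "lspan (Z_ann act) \<subseteq> ann_vec act w"
    by (rule lspan_subset_ann_vec) (auto simp: Z_ann_def annihilator_def ann_vec_def)
  ultimately have "x \<in> ann_vec act w" "y \<in> ann_vec act w" "r = x + y"
    using eta_ideal_subset_ann_vec by blast+
  then show "r \<in> ann_vec act w"
    by (simp add: ann_vec_def act_add_left)
qed

end

theorem mainTheorem1:
  fixes sc :: "complex \<Rightarrow> 'r::ring_1" and f :: "complex poly" and E F H :: 'r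
    and act :: "'r \<Rightarrow> 'v::ab_group_add \<Rightarrow> 'v" and a :: complex and w :: 'v
  assumes "is_R_algebra sc f E F H"
    and "is_module act"
    and "a \<noteq> 0"
    and "cyclic_whittaker sc act E a w"
  shows "ann_vec act w =
           {x + y | x y. x \<in> lspan (Z_ann act) \<and> y \<in> lspan (R_eta sc E a)}"
proof -
  interpret whittaker_module sc f E F H a act w
    using assms by unfold_locales
  show ?thesis
    by (rule ann_vec_eq)
qed

end
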